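(* Let $\mathbf D\in\mathbb R^{d\times d}$ be symmetric with $\mathrm{Id}\le\mathbf D\le\lambda\,\mathrm{Id}$ (with $\lambda$ the upper bound of the rates $c_b$ in the context). Then there exists a symmetric exclusion process (with finitely supported symmetric jump rates $Q$) whose diffusion matrix is $\mathbf D$. Moreover, there is a constant $C=C(d,\lambda)<\infty$ such that for every $F\in L^2(\mathcal X,\mathbb P_\rho)$, $$\langle F(-\bar{\mathcal L})F\rangle_\rho\ge\frac18\sum_{b}\langle(\pi_bF)^2\rangle_\rho,\qquad \langle F(-\bar{\mathcal L})F\rangle_\rho\le C\,\langle F(-\mathcal L)F\rangle_\rho,$$ where $\bar{\mathcal L}$ is the generator of this symmetric exclusion process and the first sum runs over all nearest-neighbour bonds of $\mathbb Z^d$.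
   Context: $\mathcal X=\{0,1\}^{\mathbb Z^d}$, $\pi_{x,y}F(\eta)=F(\eta^{x,y})-F(\eta)$ where $\eta^{x,y}$ exchanges the values at $x,y$; $\pi_b=\pi_{x,y}$ for a nearest-neighbour bond $b=\{x,y\}$. $\mathbb P_\rho$ is the Bernoulli$(\rho)$ product measure, $\rho\in(0,1)$, $\langle\cdot\rangle_\rho$ its expectation. The non-gradient generator is $\mathcal L=\sum_b c_b\pi_b$ with rates $c_{x,y}=c_{y,x}$ that depend only on $\{\eta_z:|z-x|\le\mathbf r\}$, satisfy $1\le c_{x,y}\le\lambda$, $c_{x,y}=\tau_xc_{0,y-x}$ (with $(\tau_x F)(\eta)=F(\eta_{x+\cdot})$), and do not depend on $\eta_x,\eta_y$; thus $\langle F(-\mathcal L)F\rangle_\rho=\frac12\sum_b\langle c_b(\pi_bF)^2\rangle_\rho$. A symmetric exclusion process (SEP) with jump rates $Q:\mathbb Z^d\to[0,\infty)$, finitely supported and with $Q_y=Q_{-y}$, has generator $\bar{\mathcal L}=\frac12\sum_{x\in\mathbb Z^d}\sum_{y\in\mathbb Z^d}Q_{y-x}\pi_{x,y}$, and its diffusion matrix is $\frac12\sum_{y}Q_y\,yy^{\mathsf T}$. *)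

theory Defs
  imports "HOL-Probability.Probability"
begin

text \<open>Sites of Z^d are int^'d (the dimension d = CARD('d)); configurations are
  maps from sites to bool (eta_x = 1 iff True).\<close>

type_synonym 'd site = "int ^ 'd"
type_synonym 'd config = "'d site \<Rightarrow> bool"

definition bern :: "real \<Rightarrow> 'd::finite config measure" where
  "bern \<rho> = (\<Pi>\<^sub>M z\<in>UNIV. measure_pmf (bernoulli_pmf \<rho>))"

definition exch :: "'d::finite site \<Rightarrow> 'd site \<Rightarrow> 'd config \<Rightarrow> 'd config" where
  "exch x y \<eta> = (\<lambda>z. if z = x then \<eta> y else if z = y then \<eta> x else \<eta> z)"

definition piF :: "'d::finite site \<Rightarrow> 'd site \<Rightarrow> ('d config \<Rightarrow> real) \<Rightarrow> 'd config \<Rightarrow> real" where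
  "piF x y F \<eta> = F (exch x y \<eta>) - F \<eta>"

text \<open>Unit vector e_i; every nearest-neighbour bond is uniquely {x, x + e_i}.\<close>
definition unitv :: "'d::finite \<Rightarrow> 'd site" where
  "unitv i = (\<chi> j. if j = i then 1 else 0)"

definition nearest :: "'d::finite site \<Rightarrow> 'd site \<Rightarrow> bool" where
  "nearest x y \<longleftrightarrow> (\<Sum>i\<in>UNIV. \<bar>x $ i - y $ i\<bar>) = 1"

definition rvec :: "'d::finite site \<Rightarrow> real ^ 'd" where
  "rvec z = (\<chi> i. real_of_int (z $ i))"

definition shift :: "'d::finite site \<Rightarrow> 'd config \<Rightarrow> 'd config" where
  "shift x \<eta> = (\<lambda>z. \<eta> (x + z))"

definition admissible_rates ::
  "real \<Rightarrow> real \<Rightarrow> ('d::finite site \<Rightarrow> 'd site \<Rightarrow> 'd config \<Rightarrow> real) \<Rightarrow> bool" where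
  "admissible_rates lam r c \<longleftrightarrow>
     (\<forall>x y \<eta>. nearest x y \<longrightarrow>
        c x y \<eta> = c y x \<eta>
      \<and> 1 \<le> c x y \<eta> \<and> c x y \<eta> \<le> lam
      \<and> c x y \<eta> = c 0 (y - x) (shift x \<eta>)
      \<and> (\<forall>b. c x y (\<eta>(x := b)) = c x y \<eta> \<and> c x y (\<eta>(y := b)) = c x y \<eta>)
      \<and> (\<forall>\<eta>'. (\<forall>z. norm (rvec (z - x)) \<le> r \<longrightarrow> \<eta>' z = \<eta> z) \<longrightarrow> c x y \<eta>' = c x y \<eta>))"

text \<open>Dirichlet form <F(-L)F>_rho = 1/2 sum_b <c_b (pi_b F)^2>_rho (bonds b = {x, x+e_i}).\<close>
definition ng_form :: "('d::finite site \<Rightarrow> 'd site \<Rightarrow> 'd config \<Rightarrow> real) \<Rightarrow> real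
     \<Rightarrow> ('d config \<Rightarrow> real) \<Rightarrow> ennreal" where
  "ng_form c \<rho> F = (\<Sum>\<^sub>\<infinity>(x, i)\<in>UNIV.
      ennreal (1/2) * (\<integral>\<^sup>+ \<eta>. ennreal (c x (x + unitv i) \<eta> * (piF x (x + unitv i) F \<eta>)\<^sup>2) \<partial>bern \<rho>))"

definition bond_energy :: "real \<Rightarrow> ('d::finite config \<Rightarrow> real) \<Rightarrow> ennreal" where
  "bond_energy \<rho> F = (\<Sum>\<^sub>\<infinity>(x, i)\<in>UNIV.
      (\<integral>\<^sup>+ \<eta>. ennreal ((piF x (x + unitv i) F \<eta>)\<^sup>2) \<partial>bern \<rho>))"

text \<open>Dirichlet form of the SEP with generator 1/2 sum_x sum_y Q_{y-x} pi_{x,y}: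
  <F(-Lbar)F>_rho = 1/4 sum_x sum_y Q_{y-x} <(pi_{x,y}F)^2>_rho.\<close>
definition sep_form :: "('d::finite site \<Rightarrow> real) \<Rightarrow> real \<Rightarrow> ('d config \<Rightarrow> real) \<Rightarrow> ennreal" where
  "sep_form Q \<rho> F = (\<Sum>\<^sub>\<infinity>(x, y)\<in>UNIV.
      ennreal (Q (y - x) / 4) * (\<integral>\<^sup>+ \<eta>. ennreal ((piF x y F \<eta>)\<^sup>2) \<partial>bern \<rho>))"

definition sep_rates :: "('d::finite site \<Rightarrow> real) \<Rightarrow> bool" where
  "sep_rates Q \<longleftrightarrow> (\<forall>y. 0 \<le> Q y \<and> Q y = Q (- y)) \<and> finite {y. Q y \<noteq> 0}"

definition diffusion_matrix :: "('d::finite site \<Rightarrow> real) \<Rightarrow> real ^ 'd ^ 'd" where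
  "diffusion_matrix Q = (\<chi> i j. (1/2) * (\<Sum>y\<in>{y. Q y \<noteq> 0}.
       Q y * real_of_int (y $ i) * real_of_int (y $ j)))"

definition loewner_le :: "real ^ 'd ^ 'd \<Rightarrow> real ^ 'd ^ 'd \<Rightarrow> bool" where
  "loewner_le A B \<longleftrightarrow> (\<forall>v. v \<bullet> (A *v v) \<le> v \<bullet> (B *v v))"

definition L2 :: "real \<Rightarrow> ('d::finite config \<Rightarrow> real) \<Rightarrow> bool" where
  "L2 \<rho> F \<longleftrightarrow> F \<in> borel_measurable (bern \<rho>) \<and> integrable (bern \<rho>) (\<lambda>\<eta>. (F \<eta>)\<^sup>2)"

end

theory Submission
  imports Defs
begin

(* Since D >= I, the matrix D - 3I/4 is positive semidefinite and hence, by Cholesky elimination,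
   a nonnegative combination of outer products w w^T.  Rounding the vectors w approximates it
   within the cone generated by integer outer products p p^T; the error plus the remaining I/4 is
   diagonally dominant, hence a nonnegative combination of e_i e_i^T and
   (e_i +- e_j)(e_i +- e_j)^T.  So D - I/2 = sum_p c_p p p^T with finitely many integer p and
   c_p >= 0, and the rates c_p on +-p together with 1/2 on each +-e_i have diffusion matrix D;
   Q(e_i) >= 1/2 gives the lower bound.

   For the upper bound, the exchange across x, z factors through a third site w, so by the
   exchangeability of the Bernoulli measure and a weighted Young inequality the energy of all
   jumps by v is at most 4 |v|_1^2 <= 4 d |v|^2 times the nearest-neighbour energy.  Summing
   against Q gives sum_v Q_v |v|^2 = 2 tr D <= 2 d lambda, and c_b >= 1 bounds the
   nearest-neighbour energy by twice the non-gradient form: C = 4 d^2 lambda. *)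

section \<open>Positive semidefinite matrices and outer products\<close>

definition outer :: "real^'n::finite \<Rightarrow> real^'n^'n" where
  "outer w = (\<chi> i j. w$i * w$j)"

lemma outer_nth [simp]: "outer w $ i $ j = w$i * w$j"
  by (simp add: outer_def)

lemma outer_mult_vec: "outer w *v v = (w \<bullet> v) *\<^sub>R w"
  by (simp add: vec_eq_iff matrix_vector_mult_def inner_vec_def sum_distrib_left mult_ac)

lemma symmetric_nth: "transpose D = D \<Longrightarrow> D$j$i = D$i$j"
  by (metis transpose_def vec_lambda_beta)

lemma convex_cone_hull_sum:
  assumes "finite I" "\<And>i. i \<in> I \<Longrightarrow> f i \<in> convex_cone hull S"
  shows "(\<Sum>i\<in>I. f i) \<in> convex_cone hull S"
  using assms
  by (induction I rule: finite_induct) (auto intro: convex_cone_hull_add convex_cone_hull_contains_0)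

lemma convex_cone_hull_range_explicit:
  "x \<in> convex_cone hull range g \<longleftrightarrow>
     (\<exists>S c. finite S \<and> (\<forall>a\<in>S. 0 \<le> c a) \<and> x = (\<Sum>a\<in>S. c a *\<^sub>R g a))"
proof
  assume "x \<in> convex_cone hull range g"
  then consider "x = 0" | t y where "0 \<le> t" "y \<in> convex hull range g" "x = t *\<^sub>R y"
    by (auto simp: convex_cone_hull_separate conic_hull_explicit)
  then show "\<exists>S c. finite S \<and> (\<forall>a\<in>S. 0 \<le> c a) \<and> x = (\<Sum>a\<in>S. c a *\<^sub>R g a)"
  proof cases
    case 1
    then show ?thesis by (intro exI[of _ "{}"]) auto
  next
    case 2
    then obtain T u where T: "finite T" "T \<subseteq> range g" "\<forall>v\<in>T. 0 \<le> u v"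
        "y = (\<Sum>v\<in>T. u v *\<^sub>R v)"
      by (auto simp: convex_hull_explicit)
    have inj: "inj_on (inv g) T"
      using T(2) by (rule inj_on_inv_into)
    have "x = (\<Sum>v\<in>T. (t * u (g (inv g v))) *\<^sub>R g (inv g v))"
      using 2 T by (simp add: scaleR_sum_right f_inv_into_f subset_iff)
    also have "\<dots> = (\<Sum>a\<in>inv g ` T. (t * u (g a)) *\<^sub>R g a)"
      by (simp add: sum.reindex[OF inj])
    finally show ?thesis
      using 2 T by (intro exI[of _ "inv g ` T"] exI[of _ "\<lambda>a. t * u (g a)"])
        (auto simp: f_inv_into_f subset_iff)
  qed
next
  assume "\<exists>S c. finite S \<and> (\<forall>a\<in>S. 0 \<le> c a) \<and> x = (\<Sum>a\<in>S. c a *\<^sub>R g a)"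
  then obtain S c where "finite S" "\<forall>a\<in>S. 0 \<le> c a" "x = (\<Sum>a\<in>S. c a *\<^sub>R g a)"
    by blast
  then show "x \<in> convex_cone hull range g"
    by (auto intro!: convex_cone_hull_sum convex_cone_hull_mul intro: hull_inc)
qed

lemma axis_inner_mult_vec:
  fixes D :: "real^'n::finite^'m::finite"
  shows "axis k 1 \<bullet> (D *v v) = D$k \<bullet> v"
proof -
  have "axis k 1 \<bullet> (D *v v) = (D *v v) $ k"
    by (simp add: inner_axis')
  then show ?thesis
    by (simp add: matrix_vector_mult_def inner_vec_def)
qed

lemma quadratic_form_add_axis:
  fixes D :: "real^'n::finite^'n"
  assumes "transpose D = D"
  shows "(v + t *\<^sub>R axis k 1) \<bullet> (D *v (v + t *\<^sub>R axis k 1))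
    = v \<bullet> (D *v v) + 2 * t * (D$k \<bullet> v) + t\<^sup>2 * D$k$k"
proof -
  have "v \<bullet> (D *v axis k 1) = D$k \<bullet> v"
    by (metis assms axis_inner_mult_vec dot_lmul_matrix inner_commute vector_transpose_matrix)
  moreover have "axis k 1 \<bullet> (D *v axis k 1) = D$k$k"
    by (simp add: axis_inner_mult_vec inner_axis)
  ultimately show ?thesis
    by (simp add: matrix_vector_right_distrib matrix_vector_mult_scaleR inner_add_left
        inner_add_right axis_inner_mult_vec power2_eq_square algebra_simps)
qed

lemma psd_zero_diagonal_imp_zero_row:
  fixes D :: "real^'n::finite^'n"
  assumes sym: "transpose D = D" and psd: "\<And>v. 0 \<le> v \<bullet> (D *v v)" and "D$k$k = 0"
  shows "D$k = 0"
proof -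
  define v where "v = D$k"
  \<comment> \<open>chosen so that the quadratic form at \<open>v + t e\<^sub>k\<close> equals \<open>-1\<close>\<close>
  define t where "t = - (v \<bullet> (D *v v) + 1) / (2 * (D$k \<bullet> v))"
  have "D$k \<bullet> v = 0"
  proof (rule ccontr)
    assume "D$k \<bullet> v \<noteq> 0"
    then have "(v + t *\<^sub>R axis k 1) \<bullet> (D *v (v + t *\<^sub>R axis k 1)) = -1"
      unfolding quadratic_form_add_axis[OF sym] using \<open>D$k$k = 0\<close> by (simp add: t_def field_simps)
    then show False
      using psd[of "v + t *\<^sub>R axis k 1"] by simp
  qed
  then show ?thesis by (simp add: v_def)
qed

definition schur_complement :: "real^'n::finite^'n \<Rightarrow> 'n \<Rightarrow> real^'n^'n" where
  "schur_complement D k = D - (1 / D$k$k) *\<^sub>R outer (D$k)"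

lemma schur_complement_nth: "schur_complement D k $ i $ j = D$i$j - D$k$i * D$k$j / D$k$k"
  by (simp add: schur_complement_def)

lemma schur_complement_symmetric:
  assumes "transpose D = D"
  shows "transpose (schur_complement D k) = schur_complement D k"
  by (simp add: vec_eq_iff transpose_def schur_complement_nth symmetric_nth[OF assms] mult.commute)

lemma schur_complement_row_eq_0:
  assumes "transpose D = D" "D$k$k \<noteq> 0" "i = k \<or> D$i = 0"
  shows "schur_complement D k $ i = 0"
  using assms symmetric_nth[OF assms(1), of i k] by (auto simp: vec_eq_iff schur_complement_nth)

lemma psd_schur_complement:
  fixes D :: "real^'n::finite^'n"
  assumes sym: "transpose D = D" and psd: "\<And>v. 0 \<le> v \<bullet> (D *v v)" and a: "0 < D$k$k"
  shows "0 \<le> v \<bullet> (schur_complement D k *v v)"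
proof -
  define t where "t = - (D$k \<bullet> v) / D$k$k"
  have "v \<bullet> (schur_complement D k *v v) = v \<bullet> (D *v v) - (D$k \<bullet> v)\<^sup>2 / D$k$k"
    by (simp add: schur_complement_def matrix_vector_mult_diff_rdistrib outer_mult_vec inner_diff_right
        scaleR_matrix_vector_assoc[symmetric] inner_commute[of v] power2_eq_square)
  also have "\<dots> = (v + t *\<^sub>R axis k 1) \<bullet> (D *v (v + t *\<^sub>R axis k 1))"
    unfolding quadratic_form_add_axis[OF sym] using a by (simp add: t_def power2_eq_square field_simps)
  finally show ?thesis using psd by simp
qed

text \<open>Cholesky elimination: the pivot row \<open>k\<close> is split off as a rank-one term, and the
  Schur complement vanishes on that row.\<close>

lemma psd_supported_in_convex_cone_outer:
  fixes D :: "real^'n::finite^'n"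
  assumes "finite S" "transpose D = D" "\<And>v. 0 \<le> v \<bullet> (D *v v)" "\<And>i. i \<notin> S \<Longrightarrow> D$i = 0"
  shows "D \<in> convex_cone hull range outer"
  using assms
proof (induction S arbitrary: D rule: finite_induct)
  case empty
  then have "D = 0" by (simp add: vec_eq_iff)
  then show ?case by (simp add: convex_cone_hull_contains_0)
next
  case (insert k T)
  note sym = insert.prems(1) and psd = insert.prems(2) and supp = insert.prems(3)
  show ?case
  proof (cases "D$k$k = 0")
    case True
    then have "D$k = 0"
      using psd_zero_diagonal_imp_zero_row[OF sym psd] by blast
    then show ?thesis
      using insert.IH[OF sym psd] supp by (metis insert_iff)
  next
    case False
    moreover have "0 \<le> D$k$k"
      using psd[of "axis k 1"] by (simp add: axis_inner_mult_vec inner_axis)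
    ultimately have a: "0 < D$k$k" by simp
    have "schur_complement D k \<in> convex_cone hull range outer"
      using supp a
      by (intro insert.IH schur_complement_symmetric[OF sym] psd_schur_complement[OF sym psd]
          schur_complement_row_eq_0[OF sym]) auto
    moreover have "(1 / D$k$k) *\<^sub>R outer (D$k) \<in> convex_cone hull range outer"
      using a by (simp add: convex_cone_hull_mul hull_inc)
    ultimately have "schur_complement D k + (1 / D$k$k) *\<^sub>R outer (D$k) \<in> convex_cone hull range outer"
      by (rule convex_cone_hull_add)
    then show ?thesis by (simp add: schur_complement_def)
  qed
qed

lemma psd_in_convex_cone_outer:
  fixes D :: "real^'n::finite^'n"
  assumes "transpose D = D" "\<And>v. 0 \<le> v \<bullet> (D *v v)"
  shows "D \<in> convex_cone hull range outer"
  using psd_supported_in_convex_cone_outer[of UNIV D] assms by simp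

section \<open>Integer outer products\<close>

definition integer_outer_cone :: "(real^'n::finite^'n) set" where
  "integer_outer_cone = convex_cone hull range (\<lambda>p. outer (rvec p))"

lemma floor_mult_divide_tendsto: "(\<lambda>n. real_of_int \<lfloor>real n * x\<rfloor> / real n) \<longlonglongrightarrow> x"
proof (rule tendsto_sandwich[of "\<lambda>n. x - 1 / real n" _ _ "\<lambda>_. x"])
  have bounds: "x - 1 / real n \<le> real_of_int \<lfloor>real n * x\<rfloor> / real n
      \<and> real_of_int \<lfloor>real n * x\<rfloor> / real n \<le> x" if "0 < n" for n
  proof -
    have "(real n * x - 1) / real n \<le> real_of_int \<lfloor>real n * x\<rfloor> / real n"
      "real_of_int \<lfloor>real n * x\<rfloor> / real n \<le> (real n * x) / real n"
      by (intro divide_right_mono; linarith)+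
    then show ?thesis using that by (simp add: diff_divide_distrib)
  qed
  show "\<forall>\<^sub>F n in sequentially. x - 1 / real n \<le> real_of_int \<lfloor>real n * x\<rfloor> / real n"
    "\<forall>\<^sub>F n in sequentially. real_of_int \<lfloor>real n * x\<rfloor> / real n \<le> x"
    by (rule eventually_mono[OF eventually_gt_at_top[of 0]], use bounds in blast)+
  show "(\<lambda>n. x - 1 / real n) \<longlonglongrightarrow> x"
    using tendsto_diff[OF tendsto_const lim_1_over_n, of x] by simp
qed simp

lemma outer_in_closure_integer_outer_cone: "outer w \<in> closure integer_outer_cone"
proof -
  define w' where "w' n = (1 / real n) *\<^sub>R rvec (\<chi> i. \<lfloor>real n * w$i\<rfloor>)" for n
  have "w' \<longlonglongrightarrow> w"
    by (rule vec_tendstoI) (simp add: w'_def rvec_def floor_mult_divide_tendsto)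
  then have "(\<lambda>n. outer (w' n)) \<longlonglongrightarrow> outer w"
    unfolding outer_def by (intro tendsto_vec_lambda tendsto_mult tendsto_vec_nth)
  moreover have "outer (w' n) \<in> integer_outer_cone" for n
  proof -
    have "outer (w' n) = (1 / real n)\<^sup>2 *\<^sub>R outer (rvec (\<chi> i. \<lfloor>real n * w$i\<rfloor>))"
      by (simp add: vec_eq_iff w'_def power2_eq_square)
    then show ?thesis
      unfolding integer_outer_cone_def by (simp add: convex_cone_hull_mul hull_inc)
  qed
  ultimately show ?thesis
    unfolding closure_sequential by (intro exI[where x="\<lambda>n. outer (w' n)"]) simp
qed

lemma convex_cone_outer_subset_closure_integer_outer_cone:
  "convex_cone hull range outer \<subseteq> closure (integer_outer_cone :: (real^'n::finite^'n) set)"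
proof (rule hull_minimal)
  show "range outer \<subseteq> closure (integer_outer_cone :: (real^'n^'n) set)"
    using outer_in_closure_integer_outer_cone by blast
  have "convex_cone (integer_outer_cone :: (real^'n^'n) set)"
    unfolding integer_outer_cone_def by (rule convex_cone_convex_cone_hull)
  then show "convex_cone (closure (integer_outer_cone :: (real^'n^'n) set))"
    unfolding convex_cone_def using closure_subset by (auto intro: conic_closure)
qed

lemma integer_outer_cone_symmetric:
  "M \<in> integer_outer_cone \<Longrightarrow> transpose M = M"
proof -
  have "convex_cone {M :: real^'n::finite^'n. transpose M = M}"
    by (auto simp: convex_cone_iff vec_eq_iff transpose_def)
  moreover have "range (\<lambda>p. outer (rvec p)) \<subseteq> {M :: real^'n^'n. transpose M = M}"
    by (auto simp: vec_eq_iff transpose_def mult.commute)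
  ultimately show "M \<in> integer_outer_cone \<Longrightarrow> transpose M = M"
    unfolding integer_outer_cone_def using hull_minimal by blast
qed

lemma rvec_unitv: "rvec (unitv i) = axis i 1"
  by (simp add: vec_eq_iff rvec_def unitv_def axis_def)

lemma inj_unitv: "inj (unitv :: 'd::finite \<Rightarrow> 'd site)"
  by (metis injI rvec_unitv axis_eq_axis zero_neq_one)

definition signed_pair_outer :: "real \<Rightarrow> 'n::finite \<Rightarrow> 'n \<Rightarrow> real^'n^'n" where
  "signed_pair_outer m i j =
     (\<bar>m\<bar> / 2) *\<^sub>R outer (rvec (unitv i + (if 0 \<le> m then unitv j else - unitv j)))"

lemma signed_pair_outer_in_integer_outer_cone: "signed_pair_outer m i j \<in> integer_outer_cone"
  unfolding integer_outer_cone_def signed_pair_outer_def by (simp add: convex_cone_hull_mul hull_inc)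

lemma signed_pair_outer_nth:
  "signed_pair_outer m i j $ a $ b
   = (if a = b \<and> i = a then \<bar>m\<bar> / 2 else 0) + (if a = b \<and> j = a then \<bar>m\<bar> / 2 else 0)
     + (if i = a \<and> j = b then m / 2 else 0) + (if i = b \<and> j = a then m / 2 else 0)"
  unfolding signed_pair_outer_def
  by (cases "0 \<le> m"; cases "a = i"; cases "a = j"; cases "b = i"; cases "b = j")
    (auto simp: rvec_def unitv_def)

lemma sum_signed_pair_outer_nth:
  fixes N :: "'n::finite \<Rightarrow> 'n \<Rightarrow> real"
  assumes N_sym: "\<And>i j. N j i = N i j"
  shows "(\<Sum>i\<in>UNIV. \<Sum>j\<in>UNIV. signed_pair_outer (N i j) i j) $ a $ b
    = (if a = b then (\<Sum>j\<in>UNIV. \<bar>N a j\<bar>) else 0) + N a b"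
proof -
  have inner: "(\<Sum>j\<in>UNIV. signed_pair_outer (N i j) i j $ a $ b)
    = (if a = b \<and> i = a then (\<Sum>j\<in>UNIV. \<bar>N i j\<bar> / 2) else 0) + (if a = b then \<bar>N i a\<bar> / 2 else 0)
      + (if i = a then N i b / 2 else 0) + (if i = b then N i a / 2 else 0)" for i
    unfolding signed_pair_outer_nth
    by (cases "a = b"; cases "i = a"; cases "i = b") (simp_all add: sum.distrib flip: sum_distrib_left)
  have col: "(\<Sum>i\<in>UNIV. \<bar>N i c\<bar>) = (\<Sum>j\<in>UNIV. \<bar>N c j\<bar>)" for c
    by (simp add: N_sym[of c])
  have "(\<Sum>i\<in>UNIV. \<Sum>j\<in>UNIV. signed_pair_outer (N i j) i j) $ a $ b
      = (\<Sum>i\<in>UNIV. \<Sum>j\<in>UNIV. signed_pair_outer (N i j) i j $ a $ b)"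
    by (simp add: sum_component)
  also have "\<dots> = (if a = b then (\<Sum>j\<in>UNIV. \<bar>N a j\<bar> / 2) + (\<Sum>i\<in>UNIV. \<bar>N i a\<bar> / 2) else 0)
      + N a b / 2 + N b a / 2"
    unfolding inner by (cases "a = b") (simp_all add: sum.distrib)
  finally show ?thesis
    by (simp add: N_sym[of a] col sum_divide_distrib[symmetric])
qed

lemma diagonally_dominant_in_integer_outer_cone:
  fixes M :: "real^'n::finite^'n"
  assumes sym: "transpose M = M" and dom: "\<And>i. (\<Sum>j\<in>-{i}. \<bar>M$i$j\<bar>) \<le> M$i$i"
  shows "M \<in> integer_outer_cone"
proof -
  define N where "N i j = (if i = j then 0 else M$i$j)" for i j
  define \<alpha> where "\<alpha> i = M$i$i - (\<Sum>j\<in>-{i}. \<bar>M$i$j\<bar>)" for i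
  have N_sym: "N j i = N i j" for i j
    by (simp add: N_def symmetric_nth[OF sym])
  have row: "(\<Sum>j\<in>UNIV. \<bar>N i j\<bar>) = (\<Sum>j\<in>-{i}. \<bar>M$i$j\<bar>)" for i
    by (subst sum.remove[of UNIV i]) (simp_all add: N_def Compl_eq_Diff_UNIV)
  have diag: "(\<Sum>i\<in>UNIV. \<alpha> i *\<^sub>R outer (rvec (unitv i))) $ a $ b = (if a = b then \<alpha> a else 0)" for a b
    by (simp add: sum_component rvec_unitv axis_def mult_if_delta if_distrib[of "\<lambda>y. _ * y"]
        cong: if_cong)
  have "M = (\<Sum>i\<in>UNIV. \<alpha> i *\<^sub>R outer (rvec (unitv i)))
      + (\<Sum>i\<in>UNIV. \<Sum>j\<in>UNIV. signed_pair_outer (N i j) i j)"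
  proof (simp only: vec_eq_iff, intro allI)
    fix a b
    show "M $ a $ b = ((\<Sum>i\<in>UNIV. \<alpha> i *\<^sub>R outer (rvec (unitv i)))
        + (\<Sum>i\<in>UNIV. \<Sum>j\<in>UNIV. signed_pair_outer (N i j) i j)) $ a $ b"
      unfolding vector_add_component diag sum_signed_pair_outer_nth[OF N_sym] row
      by (simp add: \<alpha>_def N_def)
  qed
  moreover have "(\<Sum>i\<in>UNIV. \<alpha> i *\<^sub>R outer (rvec (unitv i))) \<in> integer_outer_cone"
    unfolding integer_outer_cone_def using dom
    by (intro convex_cone_hull_sum convex_cone_hull_mul hull_inc) (auto simp: \<alpha>_def)
  moreover have "(\<Sum>i\<in>UNIV. \<Sum>j\<in>UNIV. signed_pair_outer (N i j) i j) \<in> integer_outer_cone"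
    using signed_pair_outer_in_integer_outer_cone unfolding integer_outer_cone_def
    by (intro convex_cone_hull_sum) auto
  ultimately show ?thesis
    unfolding integer_outer_cone_def by (simp add: convex_cone_hull_add)
qed

lemma entry_le_norm: "\<bar>(E::real^'n::finite^'m::finite)$i$j\<bar> \<le> norm E"
  using component_le_norm_cart[of "E$i" j] Finite_Cartesian_Product.norm_nth_le[of E i] by linarith

lemma psd_approx_in_integer_outer_cone:
  fixes X :: "real^'n::finite^'n"
  assumes "transpose X = X" "\<And>v. 0 \<le> v \<bullet> (X *v v)" "0 < \<epsilon>"
  obtains Y where "Y \<in> integer_outer_cone" "\<And>i j. \<bar>(X - Y)$i$j\<bar> < \<epsilon>"
proof -
  have "X \<in> closure integer_outer_cone"
    using convex_cone_outer_subset_closure_integer_outer_cone psd_in_convex_cone_outer[OF assms(1,2)]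
    by blast
  then obtain Y where "Y \<in> integer_outer_cone" "dist Y X < \<epsilon>"
    using assms(3) unfolding closure_approachable by blast
  moreover have "\<bar>(X - Y)$i$j\<bar> \<le> dist Y X" for i j
    using entry_le_norm[of "X - Y" i j] by (simp add: dist_norm norm_minus_commute)
  ultimately show ?thesis
    using that by (meson le_less_trans)
qed

lemma perturbed_quarter_identity_in_integer_outer_cone:
  fixes E :: "real^'n::finite^'n"
  assumes sym: "transpose E = E" and small: "\<And>i j. \<bar>E$i$j\<bar> \<le> 1 / (8 * real CARD('n))"
  shows "(1/4) *\<^sub>R mat 1 + E \<in> integer_outer_cone"
proof (rule diagonally_dominant_in_integer_outer_cone)
  define M where "M = (1/4) *\<^sub>R mat 1 + E"
  define \<eta> :: real where "\<eta> = 1 / (8 * real CARD('n))"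
  show "transpose M = M"
    using symmetric_nth[OF sym] by (simp add: vec_eq_iff transpose_def M_def mat_def)
  fix i
  have "(\<Sum>j\<in>-{i}. \<bar>M$i$j\<bar>) \<le> (\<Sum>j\<in>-{i}. \<eta>)"
    using small by (intro sum_mono) (simp add: M_def mat_def \<eta>_def)
  also have "\<dots> \<le> (\<Sum>j\<in>(UNIV::'n set). \<eta>)"
    using sum_mono2[of UNIV "-{i}" "\<lambda>_. \<eta>"] by (simp add: \<eta>_def)
  also have "\<dots> = 1/4 - 1/8"
    by (simp add: \<eta>_def)
  also have "\<dots> \<le> 1/4 - \<eta>"
    by (simp add: \<eta>_def field_simps)
  also have "\<dots> \<le> M$i$i"
    using small[of i i] by (simp add: M_def mat_def \<eta>_def)
  finally show "(\<Sum>j\<in>-{i}. \<bar>M$i$j\<bar>) \<le> M$i$i" .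
qed

lemma shifted_in_integer_outer_cone:
  fixes D :: "real^'n::finite^'n"
  assumes sym: "transpose D = D" and ge: "loewner_le (mat 1) D"
  shows "D - (1/2) *\<^sub>R mat 1 \<in> integer_outer_cone"
proof -
  \<comment> \<open>the remaining \<open>I/4\<close> absorbs the error of approximating \<open>X\<close> in the integer cone\<close>
  define X where "X = D - (3/4) *\<^sub>R mat 1"
  have X_sym: "transpose X = X"
    by (simp add: vec_eq_iff transpose_def X_def mat_def symmetric_nth[OF sym])
  have X_form: "v \<bullet> (X *v v) = v \<bullet> (D *v v) - (3/4) * (v \<bullet> v)" for v
    by (simp add: X_def matrix_vector_mult_diff_rdistrib scaleR_matrix_vector_assoc[symmetric]
        inner_diff_right)
  have D_ge: "v \<bullet> v \<le> v \<bullet> (D *v v)" for v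
    using ge by (simp add: loewner_le_def)
  have "0 \<le> v \<bullet> (X *v v)" for v
    using X_form[of v] D_ge[of v] inner_ge_zero[of v] by linarith
  moreover have "0 < 1 / (8 * real CARD('n))"
    by simp
  ultimately obtain Y where Y: "Y \<in> integer_outer_cone" "\<And>i j. \<bar>(X - Y)$i$j\<bar> < 1 / (8 * real CARD('n))"
    using psd_approx_in_integer_outer_cone[OF X_sym] by blast
  have "transpose (X - Y) = X - Y"
    using X_sym integer_outer_cone_symmetric[OF Y(1)] by (simp add: vec_eq_iff transpose_def)
  then have "(1/4) *\<^sub>R mat 1 + (X - Y) \<in> integer_outer_cone"
    using Y(2) by (intro perturbed_quarter_identity_in_integer_outer_cone less_imp_le)
  with Y(1) have "Y + ((1/4) *\<^sub>R mat 1 + (X - Y)) \<in> integer_outer_cone"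
    unfolding integer_outer_cone_def by (rule convex_cone_hull_add)
  moreover have "Y + ((1/4) *\<^sub>R mat 1 + (X - Y)) = D - (1/2) *\<^sub>R mat 1"
    by (simp add: vec_eq_iff X_def mat_def)
  ultimately show ?thesis by simp
qed

section \<open>Jump rates with prescribed diffusion matrix\<close>

definition symmetrized_rates :: "'d::finite site set \<Rightarrow> ('d site \<Rightarrow> real) \<Rightarrow> 'd site \<Rightarrow> real" where
  "symmetrized_rates P c y = (\<Sum>p\<in>P. c p * (of_bool (y = p) + of_bool (y = - p)))"

lemma symmetrized_rates_support: "{y. symmetrized_rates P c y \<noteq> 0} \<subseteq> P \<union> uminus ` P"
proof
  fix y assume "y \<in> {y. symmetrized_rates P c y \<noteq> 0}"
  then obtain p where "p \<in> P" "c p * (of_bool (y = p) + of_bool (y = - p)) \<noteq> 0"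
    unfolding symmetrized_rates_def by (auto elim: sum.not_neutral_contains_not_neutral)
  then show "y \<in> P \<union> uminus ` P"
    by (cases "y = p"; cases "y = - p") auto
qed

lemma sep_rates_symmetrized_rates:
  assumes "finite P" "\<And>p. p \<in> P \<Longrightarrow> 0 \<le> c p"
  shows "sep_rates (symmetrized_rates P c)"
  unfolding sep_rates_def
proof (intro conjI allI)
  fix y
  show "0 \<le> symmetrized_rates P c y"
    using assms(2) by (simp add: symmetrized_rates_def sum_nonneg)
  show "symmetrized_rates P c y = symmetrized_rates P c (- y)"
  proof -
    have "(- y = p) = (y = - p)" "(- y = - p) = (y = p)" for p
      by auto
    then show ?thesis
      by (simp add: symmetrized_rates_def add.commute)
  qed
next
  show "finite {y. symmetrized_rates P c y \<noteq> 0}"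
    by (rule finite_subset[OF symmetrized_rates_support]) (use assms(1) in simp)
qed

lemma symmetrized_rates_ge:
  assumes "finite P" "\<And>p. p \<in> P \<Longrightarrow> 0 \<le> c p" "p \<in> P"
  shows "c p \<le> symmetrized_rates P c p"
proof -
  have "c p \<le> c p * (of_bool (p = p) + of_bool (p = - p))"
    using assms(2,3) by simp
  also have "\<dots> \<le> symmetrized_rates P c p"
    unfolding symmetrized_rates_def using assms by (intro member_le_sum) auto
  finally show ?thesis .
qed

lemma diffusion_matrix_eq_sum:
  assumes "finite T" "{y. Q y \<noteq> 0} \<subseteq> T"
  shows "diffusion_matrix Q = (1/2) *\<^sub>R (\<Sum>y\<in>T. Q y *\<^sub>R outer (rvec y))"
proof -
  have "(\<Sum>y\<in>{y. Q y \<noteq> 0}. Q y * real_of_int (y$i) * real_of_int (y$j))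
      = (\<Sum>y\<in>T. Q y * real_of_int (y$i) * real_of_int (y$j))" for i j
    using assms by (intro sum.mono_neutral_left) auto
  then show ?thesis
    by (simp add: vec_eq_iff diffusion_matrix_def sum_component rvec_def mult.assoc)
qed

lemma outer_rvec_uminus [simp]: "outer (rvec (- p)) = outer (rvec p)"
  by (simp add: vec_eq_iff rvec_def)

lemma diffusion_matrix_symmetrized_rates:
  assumes "finite P"
  shows "diffusion_matrix (symmetrized_rates P c) = (\<Sum>p\<in>P. c p *\<^sub>R outer (rvec p))"
proof -
  define T where "T = P \<union> uminus ` P"
  have T: "finite T" "\<And>p. p \<in> P \<Longrightarrow> p \<in> T \<and> - p \<in> T"
    using assms by (auto simp: T_def)
  have "diffusion_matrix (symmetrized_rates P c)
      = (1/2) *\<^sub>R (\<Sum>y\<in>T. \<Sum>p\<in>P. (c p * (of_bool (y = p) + of_bool (y = - p))) *\<^sub>R outer (rvec y))"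
    using diffusion_matrix_eq_sum[OF T(1) symmetrized_rates_support[of P c, folded T_def]]
    by (simp add: symmetrized_rates_def[abs_def] scaleR_sum_left)
  also have "\<dots> = (1/2) *\<^sub>R (\<Sum>p\<in>P. \<Sum>y\<in>T. (c p * (of_bool (y = p) + of_bool (y = - p))) *\<^sub>R outer (rvec y))"
    by (subst sum.swap) simp
  also have "\<dots> = (1/2) *\<^sub>R (\<Sum>p\<in>P. (2 * c p) *\<^sub>R outer (rvec p))"
  proof (intro arg_cong[where f="\<lambda>M. (1/2) *\<^sub>R M"] sum.cong refl)
    fix p assume "p \<in> P"
    have delta: "(\<Sum>y\<in>T. of_bool (y = q) *\<^sub>R outer (rvec y)) = outer (rvec q)" if "q \<in> T" for q
      using that T(1) by (subst sum.mono_neutral_right[of T "{q}"]) auto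
    have "(\<Sum>y\<in>T. (c p * (of_bool (y = p) + of_bool (y = - p))) *\<^sub>R outer (rvec y))
        = c p *\<^sub>R ((\<Sum>y\<in>T. of_bool (y = p) *\<^sub>R outer (rvec y))
            + (\<Sum>y\<in>T. of_bool (y = - p) *\<^sub>R outer (rvec y)))"
      by (simp add: distrib_left scaleR_add_left scaleR_add_right sum.distrib scaleR_sum_right)
    also have "\<dots> = (2 * c p) *\<^sub>R outer (rvec p)"
      using T(2)[OF \<open>p \<in> P\<close>] by (simp add: delta scaleR_2 flip: scaleR_scaleR)
    finally show "(\<Sum>y\<in>T. (c p * (of_bool (y = p) + of_bool (y = - p))) *\<^sub>R outer (rvec y))
        = (2 * c p) *\<^sub>R outer (rvec p)" .
  qed
  also have "\<dots> = (\<Sum>p\<in>P. c p *\<^sub>R outer (rvec p))"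
    by (simp add: scaleR_sum_right)
  finally show ?thesis .
qed

lemma sum_outer_axis: "(\<Sum>k\<in>UNIV. outer (axis k 1)) = (mat 1 :: real^'n::finite^'n)"
  by (simp add: vec_eq_iff sum_component axis_def mat_def mult_if_delta cong: if_cong)

lemma sep_rates_with_diffusion_matrix:
  fixes D :: "real^'d::finite^'d"
  assumes "transpose D = D" "loewner_le (mat 1) D"
  obtains Q where "sep_rates Q" "diffusion_matrix Q = D" "\<And>i. 1/2 \<le> Q (unitv i)"
proof -
  obtain S c where S: "finite S" "\<forall>p\<in>S. 0 \<le> c p"
    "D - (1/2) *\<^sub>R mat 1 = (\<Sum>p\<in>S. c p *\<^sub>R outer (rvec p))"
    using shifted_in_integer_outer_cone[OF assms]
    unfolding integer_outer_cone_def convex_cone_hull_range_explicit by blast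
  \<comment> \<open>weight \<open>1/2\<close> on the unit vectors restores the \<open>I/2\<close> and gives \<open>Q(e\<^sub>i) \<ge> 1/2\<close>\<close>
  define U where "U = range (unitv :: 'd \<Rightarrow> 'd site)"
  define P where "P = S \<union> U"
  define c' where "c' p = (if p \<in> S then c p else 0) + (if p \<in> U then 1/2 else 0)" for p
  have P: "finite P" "\<And>p. p \<in> P \<Longrightarrow> 0 \<le> c' p"
    using S by (auto simp: P_def U_def c'_def)
  have "(\<Sum>p\<in>P. c' p *\<^sub>R outer (rvec p))
      = (\<Sum>p\<in>S. c p *\<^sub>R outer (rvec p)) + (\<Sum>p\<in>U. (1/2) *\<^sub>R outer (rvec p))"
    using S(1) by (simp add: c'_def P_def U_def scaleR_add_left sum.distrib if_distrib[of "\<lambda>t. t *\<^sub>R _"]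
        sum.If_cases Int_absorb1 Int_absorb2 cong: if_cong)
  also have "(\<Sum>p\<in>U. (1/2) *\<^sub>R outer (rvec p)) = (1/2) *\<^sub>R (mat 1 :: real^'d^'d)"
    by (simp add: U_def sum.reindex[OF inj_unitv] rvec_unitv sum_outer_axis flip: scaleR_sum_right)
  finally have "diffusion_matrix (symmetrized_rates P c') = D"
    by (simp add: diffusion_matrix_symmetrized_rates[OF P(1)] flip: S(3))
  moreover have "1/2 \<le> symmetrized_rates P c' (unitv i)" for i
  proof -
    have "unitv i \<in> P" by (simp add: P_def U_def)
    then have "c' (unitv i) \<le> symmetrized_rates P c' (unitv i)"
      using P by (intro symmetrized_rates_ge) auto
    moreover have "1/2 \<le> c' (unitv i)"
      using S(2) by (simp add: c'_def U_def)
    ultimately show ?thesis by linarith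
  qed
  moreover have "sep_rates (symmetrized_rates P c')"
    using P by (intro sep_rates_symmetrized_rates) auto
  ultimately show ?thesis
    using that by blast
qed

section \<open>Exchanges and pair energies\<close>

lemma exch_eq_transpose: "exch x y \<eta> = (\<lambda>z. \<eta> (Transposition.transpose x y z))"
  by (simp add: exch_def Transposition.transpose_def fun_eq_iff)

lemma measurable_exch: "exch x y \<in> bern \<rho> \<rightarrow>\<^sub>M bern \<rho>"
proof -
  have "(\<lambda>\<eta> z. \<eta> (Transposition.transpose x y z)) \<in> bern \<rho> \<rightarrow>\<^sub>M bern \<rho>"
    unfolding bern_def by (rule measurable_PiM_single') (auto simp: space_PiM)
  then show ?thesis by (simp add: exch_eq_transpose[abs_def])
qed

lemma distr_exch_bern: "distr (bern \<rho>) (bern \<rho>) (exch x y) = bern \<rho>"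
proof -
  have "distr (bern \<rho>) (bern \<rho>) (\<lambda>\<eta>. \<lambda>z\<in>UNIV. \<eta> (Transposition.transpose x y z)) = bern \<rho>"
    unfolding bern_def
    by (rule distr_PiM_reindex) (auto simp: prob_space_measure_pmf)
  then show ?thesis by (simp add: exch_eq_transpose[abs_def] restrict_UNIV)
qed

lemma nn_integral_exch:
  assumes "f \<in> borel_measurable (bern \<rho>)"
  shows "(\<integral>\<^sup>+\<eta>. f (exch x y \<eta>) \<partial>bern \<rho>) = (\<integral>\<^sup>+\<eta>. f \<eta> \<partial>bern \<rho>)"
  by (subst nn_integral_distr[OF measurable_exch, symmetric]) (simp_all add: distr_exch_bern assms)

lemma exch_same [simp]: "exch x x \<eta> = \<eta>"
  by (auto simp: exch_def)

lemma exch_commute: "exch x y = exch y x"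
  by (auto simp: exch_def fun_eq_iff)

lemma piF_measurable:
  assumes "F \<in> borel_measurable (bern \<rho>)"
  shows "piF x y F \<in> borel_measurable (bern \<rho>)"
  unfolding piF_def[abs_def]
  by (intro borel_measurable_diff measurable_compose[OF measurable_exch assms] assms)

lemma piF_transposition_chain:
  assumes "x \<noteq> w" "w \<noteq> z" "x \<noteq> z"
  shows "piF x z F \<eta> = piF w z F (exch x w (exch w z \<eta>)) + piF x w F (exch w z \<eta>) + piF w z F \<eta>"
proof -
  have "exch w z (exch x w (exch w z \<eta>)) = exch x z \<eta>"
    using assms by (auto simp: exch_def fun_eq_iff)
  then show ?thesis by (simp add: piF_def)
qed

lemma square_sum3_le:
  fixes a b c t :: real
  assumes "0 < t"
  shows "(a + b + c)\<^sup>2 \<le> (1 + t) * b\<^sup>2 + 2 * (1 + 1/t) * a\<^sup>2 + 2 * (1 + 1/t) * c\<^sup>2"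
proof -
  have "2 * b * (a + c) \<le> t * b\<^sup>2 + (a + c)\<^sup>2 / t"
    using assms sum_squares_ge_zero[of "t * b - (a + c)" 0]
    by (simp add: power2_eq_square field_simps)
  moreover have "(a + c)\<^sup>2 \<le> 2 * a\<^sup>2 + 2 * c\<^sup>2"
    using sum_squares_ge_zero[of "a - c" 0] by (simp add: power2_eq_square algebra_simps)
  ultimately have "(a + b + c)\<^sup>2 \<le> b\<^sup>2 + t * b\<^sup>2 + (2 * a\<^sup>2 + 2 * c\<^sup>2) / t + (2 * a\<^sup>2 + 2 * c\<^sup>2)"
    using assms divide_right_mono[of "(a + c)\<^sup>2" "2 * a\<^sup>2 + 2 * c\<^sup>2" t]
    by (simp add: power2_eq_square algebra_simps)
  also have "\<dots> = (1 + t) * b\<^sup>2 + 2 * (1 + 1/t) * a\<^sup>2 + 2 * (1 + 1/t) * c\<^sup>2"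
    using assms by (simp add: field_simps)
  finally show ?thesis .
qed

definition pair_energy :: "real \<Rightarrow> ('d::finite config \<Rightarrow> real) \<Rightarrow> 'd site \<Rightarrow> 'd site \<Rightarrow> ennreal" where
  "pair_energy \<rho> F x y = (\<integral>\<^sup>+\<eta>. ennreal ((piF x y F \<eta>)\<^sup>2) \<partial>bern \<rho>)"

lemma pair_energy_commute: "pair_energy \<rho> F x y = pair_energy \<rho> F y x"
  by (simp add: pair_energy_def piF_def exch_commute)

lemma pair_energy_exch:
  assumes "F \<in> borel_measurable (bern \<rho>)"
  shows "(\<integral>\<^sup>+\<eta>. ennreal ((piF a b F (exch x y \<eta>))\<^sup>2) \<partial>bern \<rho>) = pair_energy \<rho> F a b"
  unfolding pair_energy_def using piF_measurable[OF assms]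
  by (intro nn_integral_exch) measurable

lemma pair_energy_exch_exch:
  assumes F: "F \<in> borel_measurable (bern \<rho>)"
  shows "(\<integral>\<^sup>+\<eta>. ennreal ((piF a b F (exch x y (exch x' y' \<eta>)))\<^sup>2) \<partial>bern \<rho>) = pair_energy \<rho> F a b"
proof -
  have "(\<lambda>\<eta>. piF a b F (exch x y \<eta>)) \<in> borel_measurable (bern \<rho>)"
    by (rule measurable_compose[OF measurable_exch piF_measurable[OF F]])
  then have "(\<integral>\<^sup>+\<eta>. ennreal ((piF a b F (exch x y (exch x' y' \<eta>)))\<^sup>2) \<partial>bern \<rho>)
      = (\<integral>\<^sup>+\<eta>. ennreal ((piF a b F (exch x y \<eta>))\<^sup>2) \<partial>bern \<rho>)"
    by (intro nn_integral_exch) measurable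
  then show ?thesis
    by (simp add: pair_energy_exch[OF F])
qed

lemma piF_square_triangle:
  assumes "x \<noteq> w" "w \<noteq> z" "x \<noteq> z" "0 < t"
  shows "(piF x z F \<eta>)\<^sup>2 \<le> (1 + t) * (piF x w F (exch w z \<eta>))\<^sup>2
    + 2 * (1 + 1/t) * (piF w z F (exch x w (exch w z \<eta>)))\<^sup>2 + 2 * (1 + 1/t) * (piF w z F \<eta>)\<^sup>2"
  unfolding piF_transposition_chain[OF assms(1-3)] using square_sum3_le[OF assms(4)] by simp

lemma pair_energy_triangle:
  assumes F: "F \<in> borel_measurable (bern \<rho>)" and distinct: "x \<noteq> w" "w \<noteq> z" "x \<noteq> z"
    and t: "0 < t"
  shows "pair_energy \<rho> F x z
    \<le> ennreal (1 + t) * pair_energy \<rho> F x w + ennreal (4 * (1 + 1/t)) * pair_energy \<rho> F w z"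
proof -
  define k where "k = 2 * (1 + 1/t)"
  have k: "0 \<le> k" using t by (simp add: k_def)
  have "pair_energy \<rho> F x z \<le> (\<integral>\<^sup>+\<eta>. ennreal (1 + t) * ennreal ((piF x w F (exch w z \<eta>))\<^sup>2)
      + ennreal k * ennreal ((piF w z F (exch x w (exch w z \<eta>)))\<^sup>2)
      + ennreal k * ennreal ((piF w z F \<eta>)\<^sup>2) \<partial>bern \<rho>)"
    unfolding pair_energy_def
  proof (rule nn_integral_mono)
    fix \<eta>
    have "ennreal ((piF x z F \<eta>)\<^sup>2) \<le> ennreal ((1 + t) * (piF x w F (exch w z \<eta>))\<^sup>2
        + k * (piF w z F (exch x w (exch w z \<eta>)))\<^sup>2 + k * (piF w z F \<eta>)\<^sup>2)"
      unfolding k_def by (intro ennreal_leI piF_square_triangle distinct t)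
    then show "ennreal ((piF x z F \<eta>)\<^sup>2) \<le> ennreal (1 + t) * ennreal ((piF x w F (exch w z \<eta>))\<^sup>2)
        + ennreal k * ennreal ((piF w z F (exch x w (exch w z \<eta>)))\<^sup>2)
        + ennreal k * ennreal ((piF w z F \<eta>)\<^sup>2)"
      using t k by (simp add: ennreal_plus ennreal_mult)
  qed
  also have "\<dots> = ennreal (1 + t) * pair_energy \<rho> F x w + ennreal k * pair_energy \<rho> F w z
      + ennreal k * pair_energy \<rho> F w z"
  proof -
    have "(\<lambda>\<eta>. piF w z F (exch x w (exch w z \<eta>))) \<in> borel_measurable (bern \<rho>)"
      by (intro measurable_compose[OF measurable_exch] measurable_compose[OF measurable_exch piF_measurable[OF F]])
    then show ?thesis
      using piF_measurable[OF F, of x w] piF_measurable[OF F, of w z] measurable_exch[of w z \<rho>]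
      by (simp add: nn_integral_add nn_integral_cmult pair_energy_exch[OF F] pair_energy_exch_exch[OF F])
        (simp add: pair_energy_def)
  qed
  also have "\<dots> = ennreal (1 + t) * pair_energy \<rho> F x w + (ennreal k + ennreal k) * pair_energy \<rho> F w z"
    by (simp add: distrib_right add.assoc)
  also have "ennreal k + ennreal k = ennreal (4 * (1 + 1/t))"
    using k by (simp flip: ennreal_plus add: k_def)
  finally show ?thesis .
qed

section \<open>Energies of long jumps\<close>

text \<open>The library's \<open>summable_on_ennreal\<close> only covers sums of \<open>ennreal_of_enat\<close>.\<close>

lemma ennreal_summable_on [simp]: "(f :: 'a \<Rightarrow> ennreal) summable_on A"
  by (simp add: nonneg_summable_on_complete)

lemma infsum_cmult_right_ennreal:
  fixes f :: "'a \<Rightarrow> ennreal"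
  shows "(\<Sum>\<^sub>\<infinity>x\<in>A. c * f x) = c * (\<Sum>\<^sub>\<infinity>x\<in>A. f x)"
  by (simp add: nonneg_infsum_complete SUP_mult_left_ennreal sum_distrib_left)

lemma finite_sum_le_infsum_ennreal:
  fixes f :: "'a \<Rightarrow> ennreal"
  assumes "finite A"
  shows "sum f A \<le> (\<Sum>\<^sub>\<infinity>x\<in>UNIV. f x)"
  using infsum_mono_neutral[of f A f UNIV] assms by simp

lemma infsum_translate:
  fixes g :: "'a::ab_group_add \<Rightarrow> ennreal"
  shows "(\<Sum>\<^sub>\<infinity>x\<in>UNIV. g (x + u)) = (\<Sum>\<^sub>\<infinity>x\<in>UNIV. g x)"
  by (rule infsum_reindex_bij_betw) (rule bij_betwI[where g="\<lambda>x. x - u"]; simp)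

lemma infsum_le_sum_infsum_differences:
  fixes f :: "'a::ab_group_add \<times> 'a \<Rightarrow> ennreal"
  assumes V: "finite V" and zero: "\<And>x y. y - x \<notin> V \<Longrightarrow> f (x, y) = 0"
  shows "(\<Sum>\<^sub>\<infinity>p\<in>UNIV. f p) \<le> (\<Sum>v\<in>V. \<Sum>\<^sub>\<infinity>x\<in>UNIV. f (x, x + v))"
proof (rule infsum_le_finite_sums)
  fix F :: "('a \<times> 'a) set" assume F: "finite F"
  define diff :: "'a \<times> 'a \<Rightarrow> 'a" where "diff p = snd p - fst p" for p
  let ?F = "{p \<in> F. diff p \<in> V}"
  have "f p = 0" if "p \<in> F - ?F" for p
    using that zero[of "snd p" "fst p"] by (auto simp: diff_def)
  then have "sum f F = sum f ?F"
    using F by (intro sum.mono_neutral_right) auto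
  also have "\<dots> = (\<Sum>v\<in>V. sum f {p \<in> ?F. diff p = v})"
    using F V by (intro sum.group[symmetric]) auto
  also have "\<dots> \<le> (\<Sum>v\<in>V. \<Sum>\<^sub>\<infinity>x\<in>UNIV. f (x, x + v))"
  proof (rule sum_mono)
    fix v
    have "inj_on fst {p \<in> ?F. diff p = v}"
      by (auto simp: inj_on_def diff_def)
    moreover have "f p = f (fst p, fst p + v)" if "p \<in> {p \<in> ?F. diff p = v}" for p
      using that by (auto simp: diff_def)
    ultimately have "sum f {p \<in> ?F. diff p = v} = (\<Sum>x\<in>fst ` {p \<in> ?F. diff p = v}. f (x, x + v))"
      by (simp add: sum.reindex) (rule sum.cong; auto)
    also have "\<dots> \<le> (\<Sum>\<^sub>\<infinity>x\<in>UNIV. f (x, x + v))"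
      using F by (intro finite_sum_le_infsum_ennreal) auto
    finally show "sum f {p \<in> ?F. diff p = v} \<le> (\<Sum>\<^sub>\<infinity>x\<in>UNIV. f (x, x + v))" .
  qed
  finally show "sum f F \<le> (\<Sum>v\<in>V. \<Sum>\<^sub>\<infinity>x\<in>UNIV. f (x, x + v))" .
qed simp

definition displacement_energy :: "real \<Rightarrow> ('d::finite config \<Rightarrow> real) \<Rightarrow> 'd site \<Rightarrow> ennreal" where
  "displacement_energy \<rho> F v = (\<Sum>\<^sub>\<infinity>x\<in>UNIV. pair_energy \<rho> F x (x + v))"

lemma displacement_energy_zero: "displacement_energy \<rho> F 0 = 0"
  by (simp add: displacement_energy_def pair_energy_def piF_def)

lemma displacement_energy_uminus: "displacement_energy \<rho> F (- v) = displacement_energy \<rho> F v"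
proof -
  have "displacement_energy \<rho> F (- v) = (\<Sum>\<^sub>\<infinity>x\<in>UNIV. pair_energy \<rho> F (x - v) (x - v + v))"
    unfolding displacement_energy_def by (simp add: pair_energy_commute)
  also have "\<dots> = displacement_energy \<rho> F v"
    unfolding displacement_energy_def
    using infsum_translate[where g="\<lambda>y. pair_energy \<rho> F y (y + v)" and u="- v"] by simp
  finally show ?thesis .
qed

lemma displacement_energy_unit_le: "displacement_energy \<rho> F (unitv i) \<le> bond_energy \<rho> F"
proof -
  have "displacement_energy \<rho> F (unitv i)
      = (\<Sum>\<^sub>\<infinity>(x, j)\<in>(\<lambda>x. (x, i)) ` UNIV. pair_energy \<rho> F x (x + unitv j))"
    unfolding displacement_energy_def by (subst infsum_reindex) (auto simp: inj_on_def o_def)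
  also have "\<dots> \<le> (\<Sum>\<^sub>\<infinity>(x, j)\<in>UNIV. pair_energy \<rho> F x (x + unitv j))"
    by (rule infsum_mono_neutral) auto
  also have "\<dots> = bond_energy \<rho> F"
    by (simp add: bond_energy_def pair_energy_def)
  finally show ?thesis .
qed

lemma displacement_energy_triangle:
  assumes F: "F \<in> borel_measurable (bern \<rho>)" and "u \<noteq> 0" "v \<noteq> 0" "u \<noteq> v" and t: "0 < t"
  shows "displacement_energy \<rho> F v
    \<le> ennreal (1 + t) * displacement_energy \<rho> F u
      + ennreal (4 * (1 + 1/t)) * displacement_energy \<rho> F (v - u)"
proof -
  have "displacement_energy \<rho> F v \<le> (\<Sum>\<^sub>\<infinity>x\<in>UNIV. ennreal (1 + t) * pair_energy \<rho> F x (x + u)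
      + ennreal (4 * (1 + 1/t)) * pair_energy \<rho> F (x + u) (x + v))"
    unfolding displacement_energy_def
    using assms by (intro infsum_mono pair_energy_triangle[OF F _ _ _ t]) auto
  also have "\<dots> = ennreal (1 + t) * displacement_energy \<rho> F u
      + ennreal (4 * (1 + 1/t)) * (\<Sum>\<^sub>\<infinity>x\<in>UNIV. pair_energy \<rho> F (x + u) (x + u + (v - u)))"
    by (simp add: displacement_energy_def infsum_add infsum_cmult_right_ennreal)
  also have "(\<Sum>\<^sub>\<infinity>x\<in>UNIV. pair_energy \<rho> F (x + u) (x + u + (v - u))) = displacement_energy \<rho> F (v - u)"
    unfolding displacement_energy_def by (rule infsum_translate[where g="\<lambda>y. pair_energy \<rho> F y (y + (v - u))"])
  finally show ?thesis .
qed

lemma ennreal_mult_add_mult: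
  assumes "0 \<le> a" "0 \<le> b" "0 \<le> c"
  shows "ennreal a * (ennreal b * B) + ennreal c * B = ennreal (a * b + c) * B"
proof -
  have "ennreal (a * b + c) = ennreal a * ennreal b + ennreal c"
    using assms by (simp add: ennreal_mult ennreal_plus)
  then show ?thesis by (simp add: distrib_right mult.assoc)
qed

lemma exists_unit_step:
  fixes v :: "'d::finite site"
  assumes "(\<Sum>k\<in>UNIV. \<bar>v$k\<bar>) = int (Suc n)"
  obtains e i where "e = unitv i \<or> e = - unitv i" "(\<Sum>k\<in>UNIV. \<bar>(v - e)$k\<bar>) = int n"
proof -
  obtain i where vi: "v$i \<noteq> 0"
    using assms by (metis of_nat_Suc of_nat_eq_0_iff add_is_0 sum.neutral abs_0 one_neq_zero)
  define e where "e = (if 0 < v$i then unitv i else - unitv i)"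
  have "e$k = (if k = i then sgn (v$i) else 0)" for k
    using vi by (simp add: e_def unitv_def)
  then have "\<bar>(v - e)$k\<bar> = \<bar>v$k\<bar> - of_bool (k = i)" for k
    using vi by (auto simp: sgn_if)
  then have "(\<Sum>k\<in>UNIV. \<bar>(v - e)$k\<bar>) = int n"
    using assms by (simp add: sum_subtractf)
  then show ?thesis
    using that[of e i] by (simp add: e_def)
qed

lemma displacement_energy_le_l1:
  assumes F: "F \<in> borel_measurable (bern \<rho>)"
  shows "(\<Sum>k\<in>UNIV. \<bar>v$k\<bar>) = int n
    \<Longrightarrow> displacement_energy \<rho> F v \<le> ennreal (4 * (real n)\<^sup>2) * bond_energy \<rho> F"
proof (induction n arbitrary: v)
  case 0
  then have "v = 0"
    by (simp add: vec_eq_iff sum_nonneg_eq_0_iff)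
  then show ?case by (simp add: displacement_energy_zero)
next
  case (Suc n)
  obtain e i where e: "e = unitv i \<or> e = - unitv i" and u_l1: "(\<Sum>k\<in>UNIV. \<bar>(v - e)$k\<bar>) = int n"
    using Suc.prems by (rule exists_unit_step)
  define u where "u = v - e"
  have e_le: "displacement_energy \<rho> F e \<le> bond_energy \<rho> F"
    using e displacement_energy_unit_le by (auto simp: displacement_energy_uminus)
  show ?case
  proof (cases "n = 0")
    case True
    then have "v = e"
      using u_l1 by (simp add: vec_eq_iff sum_nonneg_eq_0_iff)
    then have "displacement_energy \<rho> F v \<le> 1 * bond_energy \<rho> F"
      using e_le by simp
    also have "\<dots> \<le> ennreal (4 * (real (Suc n))\<^sup>2) * bond_energy \<rho> F"
      using True by (intro mult_right_mono) auto
    finally show ?thesis .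
  next
    case False
    then have n: "0 < real n" by simp
    have "e \<noteq> 0"
      using e by (auto simp: unitv_def vec_eq_iff)
    then have "u \<noteq> 0" "v \<noteq> 0" "u \<noteq> v"
      using u_l1 Suc.prems False by (auto simp: u_def)
    then have "displacement_energy \<rho> F v \<le> ennreal (1 + 1 / real n) * displacement_energy \<rho> F u
        + ennreal (4 * (1 + real n)) * displacement_energy \<rho> F e"
      using displacement_energy_triangle[OF F, of u v "1 / real n"] n by (simp add: u_def)
    also have "\<dots> \<le> ennreal (1 + 1 / real n) * (ennreal (4 * (real n)\<^sup>2) * bond_energy \<rho> F)
        + ennreal (4 * (1 + real n)) * bond_energy \<rho> F"
      using u_l1 unfolding u_def by (intro add_mono mult_left_mono Suc.IH e_le) auto
    \<comment> \<open>with \<open>t = 1/n\<close> the recursion closes at \<open>4 (n + 1)\<^sup>2\<close>\<close>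
    also have "\<dots> = ennreal ((1 + 1 / real n) * (4 * (real n)\<^sup>2) + 4 * (1 + real n)) * bond_energy \<rho> F"
      using n by (intro ennreal_mult_add_mult) auto
    also have "(1 + 1 / real n) * (4 * (real n)\<^sup>2) + 4 * (1 + real n) = 4 * (real (Suc n))\<^sup>2"
      using n by (simp add: power2_eq_square field_simps)
    finally show ?thesis .
  qed
qed

lemma displacement_energy_le:
  fixes v :: "'d::finite site"
  assumes F: "F \<in> borel_measurable (bern \<rho>)"
  shows "displacement_energy \<rho> F v
    \<le> ennreal (4 * CARD('d) * (\<Sum>k\<in>UNIV. (real_of_int (v$k))\<^sup>2)) * bond_energy \<rho> F"
proof -
  define n where "n = nat (\<Sum>k\<in>UNIV. \<bar>v$k\<bar>)"
  have n: "(\<Sum>k\<in>UNIV. \<bar>v$k\<bar>) = int n"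
    by (simp add: n_def sum_nonneg)
  have "real n = real_of_int (\<Sum>k\<in>UNIV. \<bar>v$k\<bar>)"
    using n by simp
  also have "\<dots> = (\<Sum>k\<in>UNIV. \<bar>real_of_int (v$k)\<bar>)"
    by simp
  finally have "(real n)\<^sup>2 \<le> CARD('d) * (\<Sum>k\<in>UNIV. (real_of_int (v$k))\<^sup>2)"
    using sum_squared_le_sum_of_squares[of "\<lambda>k. \<bar>real_of_int (v$k)\<bar>" UNIV] by (simp add: mult.commute)
  then have "ennreal (4 * (real n)\<^sup>2) \<le> ennreal (4 * CARD('d) * (\<Sum>k\<in>UNIV. (real_of_int (v$k))\<^sup>2))"
    by (intro ennreal_leI) simp
  then show ?thesis
    using displacement_energy_le_l1[OF F n] mult_right_mono[of _ _ "bond_energy \<rho> F"]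
    by (meson order_trans zero_le)
qed

section \<open>Comparison of Dirichlet forms\<close>

lemma sep_form_le_displacement_energy:
  assumes "sep_rates Q"
  shows "sep_form Q \<rho> F \<le> (\<Sum>v\<in>{v. Q v \<noteq> 0}. ennreal (Q v / 4) * displacement_energy \<rho> F v)"
proof -
  define g where "g = (\<lambda>(x, y). ennreal (Q (y - x) / 4) * pair_energy \<rho> F x y)"
  have "sep_form Q \<rho> F = (\<Sum>\<^sub>\<infinity>p\<in>UNIV. g p)"
    by (simp add: sep_form_def g_def pair_energy_def)
  also have "\<dots> \<le> (\<Sum>v\<in>{v. Q v \<noteq> 0}. \<Sum>\<^sub>\<infinity>x\<in>UNIV. g (x, x + v))"
    using assms unfolding sep_rates_def by (intro infsum_le_sum_infsum_differences) (simp_all add: g_def)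
  also have "\<dots> = (\<Sum>v\<in>{v. Q v \<noteq> 0}. ennreal (Q v / 4) * displacement_energy \<rho> F v)"
    unfolding displacement_energy_def infsum_cmult_right_ennreal[symmetric] by (simp add: g_def)
  finally show ?thesis .
qed

lemma bond_energy_le_sep_form:
  assumes "\<And>i. 1/2 \<le> Q (unitv i)"
  shows "ennreal (1/8) * bond_energy \<rho> F \<le> sep_form Q \<rho> F"
proof -
  define g where "g = (\<lambda>(x, y). ennreal (Q (y - x) / 4) * pair_energy \<rho> F x y)"
  define h :: "'a site \<times> 'a \<Rightarrow> 'a site \<times> 'a site" where "h = (\<lambda>(x, i). (x, x + unitv i))"
  have "inj h"
    using inj_unitv by (auto simp: inj_on_def h_def dest: injD)
  have "ennreal (1/8) * bond_energy \<rho> F = (\<Sum>\<^sub>\<infinity>(x, i)\<in>UNIV. ennreal (1/8) * pair_energy \<rho> F x (x + unitv i))"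
    by (simp add: bond_energy_def pair_energy_def case_prod_unfold flip: infsum_cmult_right_ennreal)
  also have "\<dots> \<le> (\<Sum>\<^sub>\<infinity>p\<in>UNIV. g (h p))"
    using assms by (intro infsum_mono) (auto simp: g_def h_def intro!: mult_right_mono ennreal_leI)
  also have "\<dots> = (\<Sum>\<^sub>\<infinity>q\<in>range h. g q)"
    using infsum_reindex[OF \<open>inj h\<close>, of g] by (simp add: o_def)
  also have "\<dots> \<le> (\<Sum>\<^sub>\<infinity>q\<in>UNIV. g q)"
    by (rule infsum_mono_neutral) auto
  also have "\<dots> = sep_form Q \<rho> F"
    by (simp add: sep_form_def g_def pair_energy_def)
  finally show ?thesis .
qed

lemma nearest_unitv: "nearest x (x + unitv i)"
proof -
  have "(\<Sum>k\<in>UNIV. \<bar>x $ k - (x + unitv i) $ k\<bar>) = (\<Sum>k\<in>UNIV. if k = i then 1 else 0)"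
    by (intro sum.cong refl) (simp add: unitv_def)
  then show ?thesis by (simp add: nearest_def)
qed

lemma admissible_rates_unitv:
  assumes "admissible_rates lam r c"
  shows "1 \<le> c x (x + unitv i) \<eta>" "c x (x + unitv i) \<eta> \<le> lam"
  using assms nearest_unitv[of x i] unfolding admissible_rates_def by blast+

lemma bond_energy_le_ng_form:
  assumes "admissible_rates lam r c"
  shows "bond_energy \<rho> F \<le> 2 * ng_form c \<rho> F"
proof -
  have "bond_energy \<rho> F \<le> (\<Sum>\<^sub>\<infinity>(x, i)\<in>UNIV.
      \<integral>\<^sup>+\<eta>. ennreal (c x (x + unitv i) \<eta> * (piF x (x + unitv i) F \<eta>)\<^sup>2) \<partial>bern \<rho>)"
    unfolding bond_energy_def
    using admissible_rates_unitv(1)[OF assms]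
    by (intro infsum_mono) (auto intro!: nn_integral_mono ennreal_leI simp: mult_le_cancel_right1)
  also have "\<dots> = 2 * ng_form c \<rho> F"
  proof -
    have "2 * ennreal (1/2) = ennreal (2 * (1/2))"
      by (subst ennreal_mult) simp_all
    then have "2 * ennreal (1/2) = 1"
      by simp
    then show ?thesis
      unfolding ng_form_def infsum_cmult_right_ennreal[symmetric]
      by (simp add: case_prod_unfold mult.assoc[symmetric])
  qed
  finally show ?thesis .
qed

lemma diagonal_le_of_loewner_le:
  fixes D :: "real^'n::finite^'n"
  assumes "loewner_le D (lam *\<^sub>R mat 1)"
  shows "D$k$k \<le> lam"
proof -
  have "axis k 1 \<bullet> (D *v axis k 1) \<le> axis k 1 \<bullet> ((lam *\<^sub>R mat 1) *v axis k (1::real))"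
    using assms by (simp add: loewner_le_def)
  then show ?thesis
    by (simp add: axis_inner_mult_vec inner_axis scaleR_matrix_vector_assoc[symmetric])
qed

lemma sum_rates_second_moment:
  "(\<Sum>v\<in>{v. Q v \<noteq> 0}. Q v * (\<Sum>k\<in>UNIV. (real_of_int (v$k))\<^sup>2))
    = 2 * (\<Sum>k\<in>UNIV. diffusion_matrix Q $ k $ k)"
proof -
  have "(\<Sum>v\<in>{v. Q v \<noteq> 0}. Q v * (\<Sum>k\<in>UNIV. (real_of_int (v$k))\<^sup>2))
      = (\<Sum>v\<in>{v. Q v \<noteq> 0}. \<Sum>k\<in>UNIV. Q v * real_of_int (v$k) * real_of_int (v$k))"
    by (simp add: sum_distrib_left power2_eq_square mult.assoc)
  also have "\<dots> = (\<Sum>k\<in>UNIV. \<Sum>v\<in>{v. Q v \<noteq> 0}. Q v * real_of_int (v$k) * real_of_int (v$k))"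
    by (rule sum.swap)
  finally show ?thesis
    by (simp add: diffusion_matrix_def flip: sum_divide_distrib)
qed

lemma admissible_rates_ge_one:
  assumes "admissible_rates lam r c"
  shows "1 \<le> lam"
  using admissible_rates_unitv[OF assms, of 0 undefined undefined] by linarith

lemma second_moment_le:
  fixes Q :: "'d::finite site \<Rightarrow> real" and lam :: real
  assumes "loewner_le (diffusion_matrix Q) (lam *\<^sub>R mat 1)"
  shows "(\<Sum>v\<in>{v. Q v \<noteq> 0}. Q v * (\<Sum>k\<in>UNIV. (real_of_int (v$k))\<^sup>2)) \<le> 2 * CARD('d) * lam"
proof -
  have "(\<Sum>k\<in>UNIV. diffusion_matrix Q $ k $ k) \<le> (\<Sum>k\<in>(UNIV::'d set). lam)"
    using diagonal_le_of_loewner_le[OF assms] by (intro sum_mono)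
  then show ?thesis
    unfolding sum_rates_second_moment by simp
qed

lemma sep_form_le_bond_energy:
  fixes Q :: "'d::finite site \<Rightarrow> real" and lam :: real
  assumes F: "F \<in> borel_measurable (bern \<rho>)" and Q: "sep_rates Q"
    and D: "loewner_le (diffusion_matrix Q) (lam *\<^sub>R mat 1)"
  shows "sep_form Q \<rho> F \<le> ennreal (2 * (real CARD('d))\<^sup>2 * lam) * bond_energy \<rho> F"
proof -
  define d where "d = real CARD('d)"
  define sq where "sq v = (\<Sum>k\<in>UNIV. (real_of_int (v$k))\<^sup>2)" for v :: "'d site"
  let ?V = "{v. Q v \<noteq> 0}"
  have Q_nonneg: "0 \<le> Q v" for v
    using Q by (simp add: sep_rates_def)
  have sq_nonneg: "0 \<le> sq v" for v
    by (simp add: sq_def sum_nonneg)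
  have "sep_form Q \<rho> F \<le> (\<Sum>v\<in>?V. ennreal (Q v / 4) * displacement_energy \<rho> F v)"
    by (rule sep_form_le_displacement_energy[OF Q])
  also have "\<dots> \<le> (\<Sum>v\<in>?V. ennreal (Q v / 4) * (ennreal (4 * d * sq v) * bond_energy \<rho> F))"
    unfolding d_def sq_def using displacement_energy_le[OF F] by (intro sum_mono mult_left_mono) auto
  also have "\<dots> = (\<Sum>v\<in>?V. ennreal (d * (Q v * sq v)) * bond_energy \<rho> F)"
  proof (intro sum.cong refl)
    fix v
    have "ennreal (Q v / 4 * (4 * d * sq v)) = ennreal (Q v / 4) * ennreal (4 * d * sq v)"
      using Q_nonneg[of v] sq_nonneg[of v] by (intro ennreal_mult) (simp_all add: d_def)
    then show "ennreal (Q v / 4) * (ennreal (4 * d * sq v) * bond_energy \<rho> F)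
        = ennreal (d * (Q v * sq v)) * bond_energy \<rho> F"
      by (simp add: mult.assoc mult.left_commute)
  qed
  also have "\<dots> = ennreal (d * (\<Sum>v\<in>?V. Q v * sq v)) * bond_energy \<rho> F"
    using Q_nonneg sq_nonneg
    by (simp add: sum_ennreal d_def sum_distrib_left flip: sum_distrib_right)
  also have "\<dots> \<le> ennreal (d * (2 * d * lam)) * bond_energy \<rho> F"
    using second_moment_le[OF D] by (intro mult_right_mono ennreal_leI mult_left_mono) (auto simp: d_def sq_def)
  finally show ?thesis
    by (simp add: d_def power2_eq_square mult_ac)
qed

lemma sep_form_le_ng_form:
  fixes Q :: "'d::finite site \<Rightarrow> real" and lam :: real
  assumes F: "F \<in> borel_measurable (bern \<rho>)" and Q: "sep_rates Q"
    and D: "loewner_le (diffusion_matrix Q) (lam *\<^sub>R mat 1)" and c: "admissible_rates lam r c"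
  shows "sep_form Q \<rho> F \<le> ennreal (4 * (real CARD('d))\<^sup>2 * lam) * ng_form c \<rho> F"
proof -
  have lam: "0 \<le> 2 * (real CARD('d))\<^sup>2 * lam"
    using admissible_rates_ge_one[OF c] by simp
  have "sep_form Q \<rho> F \<le> ennreal (2 * (real CARD('d))\<^sup>2 * lam) * bond_energy \<rho> F"
    by (rule sep_form_le_bond_energy[OF F Q D])
  also have "\<dots> \<le> ennreal (2 * (real CARD('d))\<^sup>2 * lam) * (2 * ng_form c \<rho> F)"
    by (intro mult_left_mono bond_energy_le_ng_form[OF c]) simp
  also have "\<dots> = ennreal (4 * (real CARD('d))\<^sup>2 * lam) * ng_form c \<rho> F"
  proof -
    have "ennreal (4 * (real CARD('d))\<^sup>2 * lam) = ennreal (2 * (real CARD('d))\<^sup>2 * lam * 2)"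
      by (simp add: mult_ac)
    also have "\<dots> = ennreal (2 * (real CARD('d))\<^sup>2 * lam) * 2"
      using lam by (subst ennreal_mult) auto
    finally show ?thesis
      by (simp only: mult_ac)
  qed
  finally show ?thesis .
qed

theorem corollary2p3:
  fixes lam :: real
  shows "\<exists>C::real. \<forall>D :: real ^ 'd::finite ^ 'd.
     transpose D = D \<and> loewner_le (mat 1) D \<and> loewner_le D (lam *\<^sub>R mat 1) \<longrightarrow>
     (\<exists>Q :: 'd site \<Rightarrow> real. sep_rates Q \<and> diffusion_matrix Q = D \<and>
        (\<forall>\<rho> r c F. 0 < \<rho> \<and> \<rho> < 1 \<and> admissible_rates lam r c \<and> L2 \<rho> F \<longrightarrow>
            ennreal (1/8) * bond_energy \<rho> F \<le> sep_form Q \<rho> F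
          \<and> sep_form Q \<rho> F \<le> ennreal C * ng_form c \<rho> F))"
proof (intro exI[of _ "4 * real CARD('d)^2 * lam"] allI impI, goal_cases)
  case (1 D)
  then obtain Q where Q: "sep_rates Q" "diffusion_matrix Q = D" "\<And>i. 1/2 \<le> Q (unitv i)"
    using sep_rates_with_diffusion_matrix by blast
  have D: "loewner_le (diffusion_matrix Q) (lam *\<^sub>R mat 1)"
    using 1 Q(2) by simp
  have "ennreal (1/8) * bond_energy \<rho> F \<le> sep_form Q \<rho> F
      \<and> sep_form Q \<rho> F \<le> ennreal (4 * real CARD('d)^2 * lam) * ng_form c \<rho> F"
    if "0 < \<rho> \<and> \<rho> < 1 \<and> admissible_rates lam r c \<and> L2 \<rho> F" for \<rho> r c F
  proof
    show "ennreal (1/8) * bond_energy \<rho> F \<le> sep_form Q \<rho> F"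
      using Q(3) by (rule bond_energy_le_sep_form)
    have "F \<in> borel_measurable (bern \<rho>)" "admissible_rates lam r c"
      using that by (simp_all add: L2_def)
    then show "sep_form Q \<rho> F \<le> ennreal (4 * real CARD('d)^2 * lam) * ng_form c \<rho> F"
      using sep_form_le_ng_form[OF _ Q(1) D] by blast
  qed
  then show ?case
    using Q by blast
qed

end
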